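(* Let $1<\beta\le2$. The indicator function $\chi_{[1/\beta,1]}$ on $[0,1]$ is not of the form $\chi_{[1/\beta,1]}=c+\psi\circ\tau_\beta-\psi$ ($m_\beta$-almost everywhere) for any constant $c\in\mathbb R$ and any function $\psi:[0,1]\to\mathbb R$ of bounded variation.
   Context: The beta-map is $\tau_\beta(x)=\beta x-[\beta x]$ on $[0,1]$, where $[y]$ is the integer part of $y$; $m_\beta$ is its unique invariant Borel probability measure absolutely continuous with respect to Lebesgue measure. $\chi_A$ denotes the indicator function of $A$. *)

theory Defs
  imports "HOL-Probability.Probability"
begin

definition beta_map :: "real \<Rightarrow> real \<Rightarrow> real" where
  "beta_map \<beta> x = \<beta> * x - of_int \<lfloor>\<beta> * x\<rfloor>"

definition bounded_variation_on :: "(real \<Rightarrow> real) \<Rightarrow> real \<Rightarrow> real \<Rightarrow> bool" where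
  "bounded_variation_on \<psi> a b \<longleftrightarrow>
     (\<exists>B. \<forall>(n::nat) (x::nat \<Rightarrow> real).
        x 0 = a \<and> x n = b \<and> (\<forall>i<n. x i \<le> x (Suc i)) \<longrightarrow>
        (\<Sum>i<n. \<bar>\<psi> (x (Suc i)) - \<psi> (x i)\<bar>) \<le> B)"

text \<open>m is a tau_beta-invariant Borel probability measure on [0,1],
  absolutely continuous w.r.t. Lebesgue measure (this measure is unique, so
  m is m_beta).\<close>
definition is_beta_acim :: "real \<Rightarrow> real measure \<Rightarrow> bool" where
  "is_beta_acim \<beta> m \<longleftrightarrow>
     prob_space m \<and>
     sets m = sets (restrict_space borel {0..1}) \<and>
     absolutely_continuous (restrict_space lborel {0..1}) m \<and>
     beta_map \<beta> \<in> measurable m m \<and>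
     (\<forall>A\<in>sets m. emeasure m (beta_map \<beta> -` A \<inter> space m) = emeasure m A)"

end

theory Submission
  imports Defs
begin

(* Suppose the indicator of [1/beta,1] were c + psi o tau - psi m-a.e. with psi of bounded
   variation, hence bounded on [0,1]. Along m-almost every orbit the Birkhoff sums of the indicator
   are then n c + O(1).

   If c <= 0, the orbit visits [1/beta,1] only finitely often; afterwards tau acts as x |-> beta x,
   which forces the orbit to reach 0. So m would be carried by the countable set of preimages of 0.

   If c > 0, the orbit cannot spend K steps in [0,1/beta) once K c exceeds the oscillation of psi,
   so it never enters the hole [0, beta^-K). The set of such points is forward invariant, and the
   hole pulls back to a gap just right of 1/beta. Expanding an interval on which the set had
   relative density close to 1 by the branches of tau would then produce ever longer such
   intervals, so its density is bounded away from 1 on every interval, and Vitali's covering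
   theorem makes it Lebesgue-null.

   Both alternatives contradict the absolute continuity of m. *)

section \<open>The beta-map and its orbits\<close>

lemma beta_map_range: "0 \<le> beta_map \<beta> x \<and> beta_map \<beta> x < 1"
  unfolding beta_map_def by linarith

lemma beta_map_lower_branch:
  assumes "0 < \<beta>" "0 \<le> x" "x < 1/\<beta>"
  shows "beta_map \<beta> x = \<beta> * x"
proof -
  have "\<lfloor>\<beta> * x\<rfloor> = 0"
    using assms by (simp add: floor_eq_iff field_simps)
  then show ?thesis by (simp add: beta_map_def)
qed

lemma beta_map_upper_branch:
  assumes "0 < \<beta>" "\<beta> \<le> 2" "1/\<beta> \<le> x" "x < 1"
  shows "beta_map \<beta> x = \<beta> * x - 1"
proof -
  have "\<beta> * x < \<beta>" using assms by simp
  moreover have "1 \<le> \<beta> * x" using assms by (simp add: field_simps)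
  ultimately have "1 \<le> \<beta> * x" "\<beta> * x < 2" using assms by linarith+
  then have "\<lfloor>\<beta> * x\<rfloor> = 1" by (simp add: floor_eq_iff)
  then show ?thesis by (simp add: beta_map_def)
qed

lemma borel_measurable_beta_map [measurable]: "beta_map \<beta> \<in> borel_measurable borel"
  unfolding beta_map_def by measurable

lemma funpow_beta_map_in_unit:
  "x \<in> {0..1} \<Longrightarrow> (beta_map \<beta> ^^ n) x \<in> {0..1}"
  by (induction n) (use beta_map_range in \<open>auto simp: less_imp_le\<close>)

lemma beta_map_preimage_subset:
  assumes "0 < \<beta>"
  shows "{x \<in> {0..1}. beta_map \<beta> x = y} \<subseteq> (\<lambda>k. (y + of_int k) / \<beta>) ` {0..\<lceil>\<beta>\<rceil>}"
proof
  fix x assume x: "x \<in> {x \<in> {0..1}. beta_map \<beta> x = y}"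
  have "\<beta> * x \<le> \<beta>" using x assms by (simp add: mult_left_le)
  then have "\<lfloor>\<beta> * x\<rfloor> \<le> \<lceil>\<beta>\<rceil>"
    by (meson floor_le_ceiling floor_mono order_trans)
  moreover have "0 \<le> \<lfloor>\<beta> * x\<rfloor>" using x assms by simp
  ultimately have "\<lfloor>\<beta> * x\<rfloor> \<in> {0..\<lceil>\<beta>\<rceil>}" by simp
  moreover have "x = (y + of_int \<lfloor>\<beta> * x\<rfloor>) / \<beta>"
    using x assms by (auto simp: beta_map_def field_simps)
  ultimately show "x \<in> (\<lambda>k. (y + of_int k) / \<beta>) ` {0..\<lceil>\<beta>\<rceil>}" by blast
qed

lemma finite_funpow_beta_map_preimage:
  assumes "0 < \<beta>"
  shows "finite {x \<in> {0..1}. (beta_map \<beta> ^^ n) x = y}"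
proof (induction n arbitrary: y)
  case 0
  then show ?case by (simp add: Collect_conj_eq)
next
  case (Suc n)
  let ?P = "\<lambda>z. {x \<in> {0..1}. beta_map \<beta> x = z}"
  have "{x \<in> {0..1}. (beta_map \<beta> ^^ Suc n) x = y}
        \<subseteq> (\<Union>z \<in> {z \<in> {0..1}. (beta_map \<beta> ^^ n) z = y}. ?P z)"
    using beta_map_range by (auto simp: funpow_Suc_right less_imp_le simp del: funpow.simps)
  moreover have "finite (?P z)" for z
    using finite_subset[OF beta_map_preimage_subset[OF assms]] by blast
  ultimately show ?case using Suc.IH by (meson finite_UN_I finite_subset)
qed

lemma countable_beta_map_grand_preimage:
  assumes "0 < \<beta>"
  shows "countable {x \<in> {0..1}. \<exists>n. (beta_map \<beta> ^^ n) x = y}"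
proof -
  have "{x \<in> {0..1}. \<exists>n. (beta_map \<beta> ^^ n) x = y} = (\<Union>n. {x \<in> {0..1}. (beta_map \<beta> ^^ n) x = y})"
    by auto
  then show ?thesis
    using finite_funpow_beta_map_preimage[OF assms] by (simp add: countable_finite)
qed

lemma funpow_beta_map_lower_branch:
  assumes "0 < \<beta>" "0 \<le> y" "\<And>i. i < n \<Longrightarrow> (beta_map \<beta> ^^ i) y < 1/\<beta>"
  shows "(beta_map \<beta> ^^ n) y = \<beta> ^ n * y"
  using assms(3)
proof (induction n)
  case (Suc n)
  then have "(beta_map \<beta> ^^ n) y = \<beta> ^ n * y" by simp
  moreover have "(beta_map \<beta> ^^ n) y < 1/\<beta>" using Suc.prems by simp
  ultimately show ?case
    using beta_map_lower_branch[of \<beta> "\<beta> ^ n * y"] assms(1,2) by simp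
qed simp

lemma funpow_beta_map_stays_lower:
  assumes "1 \<le> \<beta>" "0 \<le> y" "\<beta> ^ n * y < 1" "i < n"
  shows "(beta_map \<beta> ^^ i) y < 1/\<beta>"
  using assms(4)
proof (induction i rule: less_induct)
  case (less i)
  then have "(beta_map \<beta> ^^ i) y = \<beta> ^ i * y"
    using assms(1,2) by (intro funpow_beta_map_lower_branch) auto
  moreover have "\<beta> ^ Suc i * y \<le> \<beta> ^ n * y"
    using less.prems assms(1,2) by (intro mult_right_mono power_increasing) auto
  ultimately show ?case
    using assms(1,3) by (simp add: field_simps)
qed

lemma funpow_beta_map_upper_branch_recurrent:
  assumes "1 < \<beta>" "y \<in> {0..1}" "\<And>n. (beta_map \<beta> ^^ n) y \<noteq> 0"
  shows "\<exists>j \<ge> k. 1/\<beta> \<le> (beta_map \<beta> ^^ j) y"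
proof (rule ccontr)
  assume "\<not> ?thesis"
  then have lower: "(beta_map \<beta> ^^ (i + k)) y < 1/\<beta>" for i
    by (meson le_add2 not_le)
  define z where "z = (beta_map \<beta> ^^ k) y"
  have "0 < z"
    using funpow_beta_map_in_unit[OF assms(2), where n=k and \<beta>=\<beta>] assms(3)[of k]
    by (simp add: z_def less_le)
  obtain n where "1 / z < \<beta> ^ n" using real_arch_pow[OF assms(1)] by blast
  then have "1 < \<beta> ^ n * z" using \<open>0 < z\<close> by (simp add: field_simps)
  moreover have "(beta_map \<beta> ^^ n) z = \<beta> ^ n * z"
    using assms(1) \<open>0 < z\<close> lower by (intro funpow_beta_map_lower_branch) (auto simp: z_def funpow_add)
  moreover have "(beta_map \<beta> ^^ n) z < 1/\<beta>"
    using lower[of n] by (simp add: z_def funpow_add)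
  moreover have "1/\<beta> < 1" using assms(1) by simp
  ultimately show False by linarith
qed

lemma sum_indicator_upper_branch_unbounded:
  assumes "1 < \<beta>" "y \<in> {0..1}" "\<And>n. (beta_map \<beta> ^^ n) y \<noteq> 0"
  shows "\<exists>n. real N \<le> (\<Sum>i<n. indicator {1/\<beta>..1} ((beta_map \<beta> ^^ i) y))"
proof (induction N)
  case (Suc N)
  then obtain n where n: "real N \<le> (\<Sum>i<n. indicator {1/\<beta>..1} ((beta_map \<beta> ^^ i) y))"
    by blast
  obtain j where j: "n \<le> j" "1/\<beta> \<le> (beta_map \<beta> ^^ j) y"
    using funpow_beta_map_upper_branch_recurrent[OF assms] by blast
  have "(\<Sum>i<n. indicator {1/\<beta>..1} ((beta_map \<beta> ^^ i) y))
        \<le> (\<Sum>i<j. indicator {1/\<beta>..1} ((beta_map \<beta> ^^ i) y) :: real)"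
    using j(1) by (intro sum_mono2) auto
  moreover have "indicator {1/\<beta>..1} ((beta_map \<beta> ^^ j) y) = (1::real)"
    using j(2) funpow_beta_map_in_unit[OF assms(2)] by simp
  ultimately have "real (Suc N) \<le> (\<Sum>i<Suc j. indicator {1/\<beta>..1} ((beta_map \<beta> ^^ i) y))"
    using n by simp
  then show ?case by blast
qed (auto intro: exI[of _ 0])

section \<open>Coboundaries along orbits\<close>

lemma bounded_variation_on_bounded_oscillation:
  assumes "bounded_variation_on \<psi> a b"
  obtains B where "\<And>y z. y \<in> {a..b} \<Longrightarrow> z \<in> {a..b} \<Longrightarrow> \<bar>\<psi> y - \<psi> z\<bar> \<le> B"
proof -
  obtain V where V: "\<And>n x. x 0 = a \<Longrightarrow> x n = b \<Longrightarrow> (\<forall>i<n. x i \<le> x (Suc i)) \<Longrightarrow>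
      (\<Sum>i<n. \<bar>\<psi> (x (Suc i)) - \<psi> (x i)\<bar>) \<le> V"
    using assms unfolding bounded_variation_on_def by blast
  have from_a: "\<bar>\<psi> t - \<psi> a\<bar> \<le> V" if "t \<in> {a..b}" for t
  proof -
    define x where "x = (\<lambda>i::nat. if i = 0 then a else if i = 1 then t else b)"
    have "\<forall>i<2. x i \<le> x (Suc i)"
      using that by (auto simp: x_def less_2_cases_iff)
    then have "(\<Sum>i<2. \<bar>\<psi> (x (Suc i)) - \<psi> (x i)\<bar>) \<le> V"
      by (intro V) (simp_all add: x_def)
    then show ?thesis by (simp add: numeral_2_eq_2 x_def)
  qed
  show ?thesis
  proof (rule that)
    fix y z assume "y \<in> {a..b}" "z \<in> {a..b}"
    then show "\<bar>\<psi> y - \<psi> z\<bar> \<le> 2 * V" using from_a[of y] from_a[of z] by linarith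
  qed
qed

lemma sum_funpow_coboundary:
  fixes f \<psi> :: "'a \<Rightarrow> real"
  assumes "\<And>n. f ((T ^^ n) x) = c + \<psi> ((T ^^ Suc n) x) - \<psi> ((T ^^ n) x)"
  shows "(\<Sum>i<K. f ((T ^^ (j + i)) x)) = real K * c + \<psi> ((T ^^ (j + K)) x) - \<psi> ((T ^^ j) x)"
  by (induction K) (auto simp: assms algebra_simps)

definition cohomologous_on_orbit :: "real \<Rightarrow> real \<Rightarrow> (real \<Rightarrow> real) \<Rightarrow> real \<Rightarrow> bool" where
  "cohomologous_on_orbit \<beta> c \<psi> x \<longleftrightarrow> (\<forall>n. indicator {1/\<beta>..1} ((beta_map \<beta> ^^ n) x)
      = c + \<psi> ((beta_map \<beta> ^^ Suc n) x) - \<psi> ((beta_map \<beta> ^^ n) x))"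

lemma coboundary_orbit_hits_zero:
  fixes \<psi> :: "real \<Rightarrow> real"
  assumes "1 < \<beta>" "x \<in> {0..1}" "c \<le> 0"
    and osc: "\<And>y z. y \<in> {0..1} \<Longrightarrow> z \<in> {0..1} \<Longrightarrow> \<bar>\<psi> y - \<psi> z\<bar> \<le> B"
    and eq: "cohomologous_on_orbit \<beta> c \<psi> x"
  shows "\<exists>n. (beta_map \<beta> ^^ n) x = 0"
proof (rule ccontr)
  assume "\<nexists>n. (beta_map \<beta> ^^ n) x = 0"
  moreover obtain N :: nat where "B < real N"
    using reals_Archimedean2 by blast
  ultimately obtain n where n: "B < (\<Sum>i<n. indicator {1/\<beta>..1} ((beta_map \<beta> ^^ i) x))"
    using sum_indicator_upper_branch_unbounded[OF assms(1,2)] by (meson less_le_trans)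
  have "(\<Sum>i<n. indicator {1/\<beta>..1} ((beta_map \<beta> ^^ (0 + i)) x))
        = real n * c + \<psi> ((beta_map \<beta> ^^ (0 + n)) x) - \<psi> ((beta_map \<beta> ^^ 0) x)"
    by (rule sum_funpow_coboundary) (use eq in \<open>simp add: cohomologous_on_orbit_def\<close>)
  moreover have "real n * c \<le> 0" using assms(3) by (simp add: mult_nonneg_nonpos)
  moreover have "\<psi> ((beta_map \<beta> ^^ n) x) - \<psi> x \<le> B"
    by (rule abs_le_D1[OF osc[OF funpow_beta_map_in_unit[OF assms(2)] assms(2)]])
  ultimately show False using n by simp
qed

lemma coboundary_orbit_avoids_hole:
  fixes \<psi> :: "real \<Rightarrow> real"
  assumes "1 < \<beta>" "x \<in> {0..1}" "B < real K * c"
    and osc: "\<And>y z. y \<in> {0..1} \<Longrightarrow> z \<in> {0..1} \<Longrightarrow> \<bar>\<psi> y - \<psi> z\<bar> \<le> B"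
    and eq: "cohomologous_on_orbit \<beta> c \<psi> x"
  shows "1 / \<beta> ^ K \<le> (beta_map \<beta> ^^ j) x"
proof (rule ccontr)
  define y where "y = (beta_map \<beta> ^^ j) x"
  assume "\<not> 1 / \<beta> ^ K \<le> (beta_map \<beta> ^^ j) x"
  then have "\<beta> ^ K * y < 1" using assms(1) by (simp add: y_def field_simps)
  moreover have y: "0 \<le> y" using funpow_beta_map_in_unit[OF assms(2)] by (simp add: y_def)
  ultimately have lower: "(beta_map \<beta> ^^ (j + i)) x < 1/\<beta>" if "i < K" for i
    using funpow_beta_map_stays_lower[of \<beta> y K i] assms(1) that by (simp add: y_def funpow_add add.commute)
  have "(\<Sum>i<K. indicator {1/\<beta>..1} ((beta_map \<beta> ^^ (j + i)) x)) = (0::real)"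
  proof (intro sum.neutral ballI)
    fix i assume "i \<in> {..<K}"
    then show "indicator {1/\<beta>..1} ((beta_map \<beta> ^^ (j + i)) x) = (0::real)"
      using lower[of i] by simp
  qed
  moreover have "(\<Sum>i<K. indicator {1/\<beta>..1} ((beta_map \<beta> ^^ (j + i)) x))
        = real K * c + \<psi> ((beta_map \<beta> ^^ (j + K)) x) - \<psi> ((beta_map \<beta> ^^ j) x)"
    by (rule sum_funpow_coboundary) (use eq in \<open>simp add: cohomologous_on_orbit_def\<close>)
  moreover have "\<psi> ((beta_map \<beta> ^^ j) x) - \<psi> ((beta_map \<beta> ^^ (j + K)) x) \<le> B"
    by (rule abs_le_D1[OF osc]) (rule funpow_beta_map_in_unit[OF assms(2)])+
  ultimately show False using assms(3) by linarith
qed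

section \<open>Invariant measures\<close>

lemma AE_invariant_comp:
  assumes "T \<in> measurable M M"
    and "\<And>A. A \<in> sets M \<Longrightarrow> emeasure M (T -` A \<inter> space M) = emeasure M A"
    and "AE x in M. P x"
  shows "AE x in M. P (T x)"
proof -
  obtain N where N: "{x \<in> space M. \<not> P x} \<subseteq> N" "emeasure M N = 0" "N \<in> sets M"
    using assms(3) by (rule AE_E)
  show ?thesis
  proof (rule AE_I)
    show "{x \<in> space M. \<not> P (T x)} \<subseteq> T -` N \<inter> space M"
      using N(1) measurable_space[OF assms(1)] by auto
    show "emeasure M (T -` N \<inter> space M) = 0" using assms(2)[OF N(3)] N(2) by simp
    show "T -` N \<inter> space M \<in> sets M" using measurable_sets[OF assms(1) N(3)] .
  qed
qed

lemma AE_invariant_funpow: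
  assumes "T \<in> measurable M M"
    and "\<And>A. A \<in> sets M \<Longrightarrow> emeasure M (T -` A \<inter> space M) = emeasure M A"
    and "AE x in M. P x"
  shows "AE x in M. \<forall>n. P ((T ^^ n) x)"
proof -
  have "AE x in M. P ((T ^^ n) x)" for n
  proof (induction n)
    case (Suc n)
    from AE_invariant_comp[OF assms(1,2) this] show ?case
      by (simp add: funpow_Suc_right del: funpow.simps)
  qed (use assms(3) in simp)
  then show ?thesis by (simp add: AE_all_countable)
qed

lemma space_is_beta_acim:
  assumes "is_beta_acim \<beta> m"
  shows "space m = {0..1}"
proof -
  have "sets m = sets (restrict_space borel {0..1})"
    using assms unfolding is_beta_acim_def by blast
  then show ?thesis
    using sets_eq_imp_space_eq[of m] by (simp add: space_restrict_space)
qed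

lemma is_beta_acim_not_AE_null:
  assumes "is_beta_acim \<beta> m" "N \<in> null_sets lborel"
  shows "\<not> (AE x in m. x \<in> N)"
proof
  assume AE_N: "AE x in m. x \<in> N"
  have "prob_space m" and ac: "absolutely_continuous (restrict_space lborel {0..1}) m"
    using assms(1) unfolding is_beta_acim_def by blast+
  have "N \<inter> {0..1} \<in> null_sets (restrict_space lborel {0..1})"
    using null_set_Int2[OF assms(2)] by (simp add: null_sets_restrict_space)
  then have "N \<inter> {0..1} \<in> null_sets m"
    using ac unfolding absolutely_continuous_def by blast
  then have "AE x in m. x \<notin> N \<inter> {0..1}" by (rule AE_not_in)
  moreover have "space m = {0..1}"
    using space_is_beta_acim[OF assms(1)] .
  ultimately have "AE x in m. False" using AE_N by (auto elim: AE_mp)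
  then show False using prob_space.AE_False[OF \<open>prob_space m\<close>] by simp
qed

lemma is_beta_acim_AE_cohomologous_on_orbit:
  assumes "is_beta_acim \<beta> m"
    and "AE x in m. indicator {1/\<beta>..1} x = c + \<psi> (beta_map \<beta> x) - \<psi> x"
  shows "AE x in m. x \<in> {0..1} \<and> cohomologous_on_orbit \<beta> c \<psi> x"
proof -
  have "AE x in m. cohomologous_on_orbit \<beta> c \<psi> x"
    using assms AE_invariant_funpow[OF _ _ assms(2)] by (simp add: is_beta_acim_def cohomologous_on_orbit_def)
  moreover have "AE x in m. x \<in> {0..1}"
    by (rule AE_I2) (simp add: space_is_beta_acim[OF assms(1)])
  ultimately show ?thesis by eventually_elim blast
qed

section \<open>Relative density of Borel sets in intervals\<close>

lemma fmeasurable_lborel_Int_Ico: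
  fixes A :: "real set"
  assumes "A \<in> sets borel"
  shows "A \<inter> {u..<v} \<in> fmeasurable lborel"
  by (rule fmeasurableI2[OF fmeasurable_cbox[of u v]]) (use assms in auto)

lemma measure_lborel_Int_Ico_le:
  fixes A :: "real set"
  assumes "A \<in> sets borel" "u \<le> v"
  shows "measure lborel (A \<inter> {u..<v}) \<le> v - u"
proof -
  have "measure lborel (A \<inter> {u..<v}) \<le> measure lborel {u..<v}"
    by (rule measure_mono_fmeasurable) (auto intro: fmeasurableI2[OF fmeasurable_cbox[of u v]] assms)
  then show ?thesis using assms(2) by (simp add: measure_def)
qed

lemma measure_lborel_Int_Ico_split:
  fixes A :: "real set"
  assumes "A \<in> sets borel" "u \<le> w" "w \<le> v"
  shows "measure lborel (A \<inter> {u..<v}) = measure lborel (A \<inter> {u..<w}) + measure lborel (A \<inter> {w..<v})"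
proof -
  have "A \<inter> {u..<v} = (A \<inter> {u..<w}) \<union> (A \<inter> {w..<v})" using assms by auto
  moreover have "measure lborel ((A \<inter> {u..<w}) \<union> (A \<inter> {w..<v}))
      = measure lborel (A \<inter> {u..<w}) + measure lborel (A \<inter> {w..<v})"
    using fmeasurable_lborel_Int_Ico[OF assms(1), of u w] fmeasurable_lborel_Int_Ico[OF assms(1), of w v]
    by (intro measure_Union) (auto simp: fmeasurable_def)
  ultimately show ?thesis by simp
qed

lemma emeasure_lborel_affine_vimage:
  fixes B :: "real set"
  assumes "0 < c" "B \<in> sets borel"
  shows "emeasure lborel B = c * emeasure lborel ((\<lambda>x. c * x - t) -` B)"
proof -
  have "lborel = density (distr lborel borel (\<lambda>x. - t + c * x)) (\<lambda>_. ennreal \<bar>c\<bar>)"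
    using lborel_real_affine[of c "- t"] assms(1) by simp
  then have "emeasure lborel B = emeasure (density (distr lborel borel (\<lambda>x. - t + c * x)) (\<lambda>_. ennreal c)) B"
    using assms(1) by (metis abs_of_pos)
  also have "\<dots> = c * emeasure lborel ((\<lambda>x. - t + c * x) -` B)"
    using assms by (simp add: emeasure_density_const emeasure_distr)
  finally show ?thesis by (simp add: algebra_simps)
qed

lemma measure_lborel_expanding_affine:
  fixes A :: "real set"
  assumes "0 < c" "A \<in> sets borel" "\<And>x. x \<in> A \<Longrightarrow> a \<le> x \<Longrightarrow> x < b \<Longrightarrow> c * x - t \<in> A"
  shows "c * measure lborel (A \<inter> {a..<b}) \<le> measure lborel (A \<inter> {c*a - t..<c*b - t})"
proof -
  let ?B = "A \<inter> {c*a - t..<c*b - t}"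
  have "A \<inter> {a..<b} \<subseteq> (\<lambda>x. c * x - t) -` ?B"
    using assms by (auto intro: mult_left_mono)
  then have "emeasure lborel (A \<inter> {a..<b}) \<le> emeasure lborel ((\<lambda>x. c * x - t) -` ?B)"
    using assms(2) by (intro emeasure_mono) auto
  then have "ennreal c * emeasure lborel (A \<inter> {a..<b}) \<le> emeasure lborel ?B"
    using emeasure_lborel_affine_vimage[OF assms(1), of ?B t] assms(2) by (simp add: mult_left_mono)
  then show ?thesis
    using fmeasurable_lborel_Int_Ico[OF assms(2)] assms(1)
    by (simp add: fmeasurable_def emeasure_eq_ennreal_measure less_top ennreal_mult''[symmetric])
qed

lemma heavy_interval_expanding_affine:
  fixes A :: "real set"
  assumes "0 < c" "A \<in> sets borel" "0 \<le> \<delta>" "a \<le> b" "b - a \<le> l"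
    and heavy: "\<delta> * l \<le> measure lborel (A \<inter> {a..<b})"
    and branch: "\<And>x. x \<in> A \<Longrightarrow> a \<le> x \<Longrightarrow> x < b \<Longrightarrow> c * x - t \<in> A"
  shows "\<delta> * ((c * b - t) - (c * a - t)) \<le> measure lborel (A \<inter> {c * a - t..<c * b - t})"
    and "c * \<delta> * l \<le> (c * b - t) - (c * a - t)"
proof -
  have "\<delta> * (b - a) \<le> measure lborel (A \<inter> {a..<b})"
    using heavy assms(3,5) by (meson mult_left_mono order_trans)
  then have "c * (\<delta> * (b - a)) \<le> c * measure lborel (A \<inter> {a..<b})"
    using assms(1) by simp
  also have "\<dots> \<le> measure lborel (A \<inter> {c * a - t..<c * b - t})"
    by (rule measure_lborel_expanding_affine[OF assms(1,2) branch])
  finally show "\<delta> * ((c * b - t) - (c * a - t)) \<le> measure lborel (A \<inter> {c * a - t..<c * b - t})"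
    by (simp add: algebra_simps)
  have "\<delta> * l \<le> b - a"
    using heavy measure_lborel_Int_Ico_le[OF assms(2,4)] by linarith
  then have "c * (\<delta> * l) \<le> c * (b - a)"
    using assms(1) by simp
  then show "c * \<delta> * l \<le> (c * b - t) - (c * a - t)"
    by (simp add: algebra_simps)
qed

lemma emeasure_le_mult_open_superset:
  fixes S U :: "'a::euclidean_space set"
  assumes S: "S \<in> sets borel" and U: "open U" "S \<subseteq> U"
    and ball_bound: "\<And>x r. 0 < r \<Longrightarrow> ball x r \<subseteq> U \<Longrightarrow>
      emeasure lborel (S \<inter> ball x r) \<le> ennreal \<delta> * emeasure lborel (ball x r)"
  shows "emeasure lborel S \<le> ennreal \<delta> * emeasure lborel U"
proof -
  define K where "K = {(x, r). 0 < r \<and> ball x r \<subseteq> U}"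
  let ?B = "\<lambda>i. ball (fst i) (snd i)"
  have "\<exists>i. i \<in> K \<and> x \<in> ?B i \<and> snd i < d" if "x \<in> S" "0 < d" for x d
  proof -
    have "x \<in> U" using U(2) that(1) by blast
    then obtain r where "0 < r" "ball x r \<subseteq> U"
      by (rule openE[OF U(1)])
    then have "(x, min r d / 2) \<in> K"
      using that(2) by (auto simp: K_def)
    then show ?thesis using \<open>0 < r\<close> that(2) by (intro exI[of _ "(x, min r d / 2)"]) auto
  qed
  then obtain C where C: "countable C" "C \<subseteq> K" "pairwise (\<lambda>i j. disjnt (?B i) (?B j)) C"
    and negligible: "negligible (S - (\<Union>i \<in> C. ?B i))"
    by (rule Vitali_covering_theorem_balls)
  have disjoint: "disjoint_family_on ?B C"
    using C(3) by (auto simp: disjoint_family_on_def pairwise_def disjnt_def)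
  have UB: "(\<Union>i \<in> C. ?B i) \<in> sets borel"
    using C(1) by (intro sets.countable_UN'') auto
  have "S - (\<Union>i \<in> C. ?B i) \<in> null_sets lborel"
    using negligible S UB by (simp add: negligible_iff_null_sets null_sets_completion_iff)
  then have "emeasure lborel ((S \<inter> (\<Union>i \<in> C. ?B i)) \<union> (S - (\<Union>i \<in> C. ?B i)))
      = emeasure lborel (S \<inter> (\<Union>i \<in> C. ?B i))"
    using S UB by (intro emeasure_Un_null_set) auto
  then have "emeasure lborel S = emeasure lborel (\<Union>i \<in> C. S \<inter> ?B i)"
    by (simp add: Int_Diff_Un)
  also have "\<dots> = (\<integral>\<^sup>+i. emeasure lborel (S \<inter> ?B i) \<partial>count_space C)"
  proof (rule emeasure_UN_countable)
    show "disjoint_family_on (\<lambda>i. S \<inter> ?B i) C"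
      using disjoint unfolding disjoint_family_on_def by blast
  qed (use C(1) S in auto)
  also have "\<dots> \<le> (\<integral>\<^sup>+i. ennreal \<delta> * emeasure lborel (?B i) \<partial>count_space C)"
  proof (intro nn_integral_mono)
    fix i assume "i \<in> space (count_space C)"
    then have "i \<in> K" using C(2) by auto
    then show "emeasure lborel (S \<inter> ?B i) \<le> ennreal \<delta> * emeasure lborel (?B i)"
      by (cases i) (simp add: K_def ball_bound)
  qed
  also have "\<dots> = ennreal \<delta> * emeasure lborel (\<Union>i \<in> C. ?B i)"
    using C(1) disjoint by (simp add: nn_integral_cmult emeasure_UN_countable)
  also have "\<dots> \<le> ennreal \<delta> * emeasure lborel U"
  proof (intro mult_left_mono emeasure_mono)
    show "(\<Union>i \<in> C. ?B i) \<subseteq> U"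
    proof (rule UN_least)
      fix i assume "i \<in> C"
      then have "i \<in> K" using C(2) by blast
      then show "?B i \<subseteq> U" by (cases i) (simp add: K_def)
    qed
  qed (use U(1) in auto)
  finally show ?thesis .
qed

lemma emeasure_lborel_le_mult_open_if_intervals_light:
  fixes A U :: "real set"
  assumes A: "A \<in> sets borel" and U: "open U" "A \<inter> {a<..<b} \<subseteq> U"
    and light: "\<And>u v. a \<le> u \<Longrightarrow> u < v \<Longrightarrow> v \<le> b \<Longrightarrow> measure lborel (A \<inter> {u..<v}) \<le> \<delta> * (v - u)"
  shows "emeasure lborel (A \<inter> {a<..<b}) \<le> ennreal \<delta> * emeasure lborel U"
proof -
  have "emeasure lborel (A \<inter> {a<..<b}) \<le> ennreal \<delta> * emeasure lborel (U \<inter> {a<..<b})"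
  proof (rule emeasure_le_mult_open_superset)
    fix x r :: real assume r: "0 < r" "ball x r \<subseteq> U \<inter> {a<..<b}"
    then have "a \<le> x - r" "x + r \<le> b"
      by (auto simp: ball_eq_greaterThanLessThan greaterThanLessThan_subseteq_greaterThanLessThan)
    then have "measure lborel (A \<inter> {x - r..<x + r}) \<le> \<delta> * (2 * r)"
      using light[of "x - r" "x + r"] r(1) by simp
    have "emeasure lborel (A \<inter> {a<..<b} \<inter> ball x r) \<le> emeasure lborel (A \<inter> {x - r..<x + r})"
      using A by (intro emeasure_mono) (auto simp: ball_eq_greaterThanLessThan)
    also have "\<dots> = ennreal (measure lborel (A \<inter> {x - r..<x + r}))"
      using fmeasurable_lborel_Int_Ico[OF A, of "x - r" "x + r"]
      by (simp add: fmeasurable_def emeasure_eq_ennreal_measure less_top)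
    also have "\<dots> \<le> ennreal (\<delta> * (2 * r))"
      by (rule ennreal_leI) fact
    also have "\<dots> = ennreal \<delta> * emeasure lborel (ball x r)"
      using r(1) by (simp add: ball_eq_greaterThanLessThan ennreal_mult'')
    finally show "emeasure lborel (A \<inter> {a<..<b} \<inter> ball x r) \<le> ennreal \<delta> * emeasure lborel (ball x r)" .
  qed (use A U in auto)
  also have "\<dots> \<le> ennreal \<delta> * emeasure lborel U"
    using U(1) by (intro mult_left_mono emeasure_mono) auto
  finally show ?thesis .
qed

lemma null_sets_lborel_if_intervals_light:
  fixes A :: "real set"
  assumes A: "A \<in> sets borel" "A \<subseteq> {a..b}" and \<delta>: "0 \<le> \<delta>" "\<delta> < 1"
    and light: "\<And>u v. a \<le> u \<Longrightarrow> u < v \<Longrightarrow> v \<le> b \<Longrightarrow> measure lborel (A \<inter> {u..<v}) \<le> \<delta> * (v - u)"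
  shows "A \<in> null_sets lborel"
proof -
  define S where "S = A \<inter> {a<..<b}"
  have S: "S \<in> sets borel" using A by (simp add: S_def)
  have "bounded S"
    using A(2) by (intro bounded_subset[OF bounded_closed_interval[of a b]]) (auto simp: S_def)
  then have "emeasure lborel S \<noteq> \<top>"
    using emeasure_bounded_finite by (simp add: less_top)
  then have S_finite: "emeasure lborel S = ennreal (measure lborel S)"
    by (rule emeasure_eq_ennreal_measure)
  have "measure lborel S \<le> \<delta> * measure lborel S + e" if e: "0 < e" for e
  proof -
    obtain U where U: "open U" "S \<subseteq> U" "emeasure lborel (U - S) < e"
      using outer_regular_lborel[OF S e] by blast
    have "emeasure lborel S \<le> ennreal \<delta> * emeasure lborel U"
      unfolding S_def by (rule emeasure_lborel_le_mult_open_if_intervals_light[OF A(1) U(1) _ light])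
        (use U(2) in \<open>auto simp: S_def\<close>)
    also have "emeasure lborel U \<le> emeasure lborel S + emeasure lborel (U - S)"
      using S U(1) emeasure_subadditive[of S lborel "U - S"] by (simp add: Un_absorb1[OF U(2)])
    also have "\<dots> \<le> ennreal (measure lborel S + e)"
      using U(3) S_finite e by (simp add: ennreal_plus add_left_mono less_imp_le)
    finally have "ennreal (measure lborel S) \<le> ennreal (\<delta> * (measure lborel S + e))"
      using S_finite e \<delta>(1) by (simp add: ennreal_mult'' mult_left_mono)
    then have "measure lborel S \<le> \<delta> * (measure lborel S + e)"
      using e \<delta>(1) by (subst (asm) ennreal_le_iff) auto
    also have "\<dots> \<le> \<delta> * measure lborel S + e"
      using \<delta> e by (simp add: distrib_left)
    finally show ?thesis .
  qed
  then have "measure lborel S \<le> \<delta> * measure lborel S"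
    by (rule field_le_epsilon)
  then have "\<not> 0 < measure lborel S"
    using \<delta>(2) by (auto simp: mult_le_cancel_right1)
  then have "S \<in> null_sets lborel"
    using S S_finite measure_nonneg[of lborel S] by auto
  then have "S \<union> {a, b} \<in> null_sets lborel"
    using countable_imp_null_set_lborel[of "{a, b}"] by (rule null_sets.Un) simp
  moreover have "A \<subseteq> S \<union> {a, b}" using A(2) by (auto simp: S_def)
  ultimately show ?thesis
    using A(1) by (auto intro: null_sets_subset)
qed

section \<open>Forward invariant sets avoiding a hole\<close>

lemma beta_heavy_interval_straddling:
  fixes A :: "real set"
  assumes \<beta>: "1 < \<beta>" "\<beta> \<le> 2" and A: "A \<in> sets borel"
    and invariant: "\<And>x. x \<in> A \<Longrightarrow> beta_map \<beta> x \<in> A" and hole: "\<And>x. x \<in> A \<Longrightarrow> \<epsilon> \<le> x"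
    and \<delta>: "\<delta> \<le> 1" "1 - \<delta> < \<epsilon> / \<beta>"
    and uv: "0 \<le> u" "u < 1/\<beta>" "1/\<beta> < v" "v \<le> 1"
    and heavy: "\<delta> * (v - u) \<le> measure lborel (A \<inter> {u..<v})"
  shows "measure lborel (A \<inter> {u..<1/\<beta>}) = measure lborel (A \<inter> {u..<v})"
proof -
  have "0 < \<epsilon>" using \<delta> \<beta> by (smt (verit) divide_le_0_iff)
  \<comment> \<open>the upper branch pulls the hole \<open>[0, \<epsilon>)\<close> back to the gap \<open>[1/\<beta>, (1 + \<epsilon>)/\<beta>)\<close>,
     which is too long to fit inside an interval of relative density \<open>\<delta>\<close>\<close>
  have gap: "(1 + \<epsilon>) / \<beta> \<le> x" if "x \<in> A" "1/\<beta> \<le> x" "x < v" for x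
  proof -
    have "beta_map \<beta> x = \<beta> * x - 1"
      using that uv \<beta> by (intro beta_map_upper_branch) auto
    then have "\<epsilon> \<le> \<beta> * x - 1" using hole[OF invariant[OF that(1)]] by simp
    then show ?thesis using \<beta> by (simp add: field_simps)
  qed
  have split: "measure lborel (A \<inter> {u..<v})
      = measure lborel (A \<inter> {u..<1/\<beta>}) + measure lborel (A \<inter> {1/\<beta>..<v})"
    using uv by (intro measure_lborel_Int_Ico_split[OF A]) auto
  have "v < (1 + \<epsilon>) / \<beta>"
  proof (rule ccontr)
    assume far: "\<not> ?thesis"
    have "A \<inter> {1/\<beta>..<v} = A \<inter> {(1 + \<epsilon>) / \<beta>..<v}"
      using gap \<beta> \<open>0 < \<epsilon>\<close> by (auto simp: field_simps)
    then have "measure lborel (A \<inter> {1/\<beta>..<v}) \<le> v - (1 + \<epsilon>) / \<beta>"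
      using measure_lborel_Int_Ico_le[OF A] far by simp
    moreover have "measure lborel (A \<inter> {u..<1/\<beta>}) \<le> 1/\<beta> - u"
      using measure_lborel_Int_Ico_le[OF A] uv by simp
    ultimately have "\<epsilon> / \<beta> \<le> (1 - \<delta>) * (v - u)"
      using heavy split by (simp add: algebra_simps add_divide_distrib)
    also have "\<dots> \<le> 1 - \<delta>"
      using \<delta> uv mult_left_mono[of "v - u" 1 "1 - \<delta>"] by simp
    finally show False using \<delta> by simp
  qed
  then have "A \<inter> {1/\<beta>..<v} = {}"
    using gap by fastforce
  then show ?thesis using split by simp
qed

lemma beta_heavy_interval_expands:
  fixes A :: "real set"
  assumes \<beta>: "1 < \<beta>" "\<beta> \<le> 2" and A: "A \<in> sets borel"
    and invariant: "\<And>x. x \<in> A \<Longrightarrow> beta_map \<beta> x \<in> A" and hole: "\<And>x. x \<in> A \<Longrightarrow> \<epsilon> \<le> x"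
    and \<delta>: "0 \<le> \<delta>" "1 - \<delta> < \<epsilon> / \<beta>"
    and uv: "0 \<le> u" "u < v" "v \<le> 1"
    and heavy: "\<delta> * (v - u) \<le> measure lborel (A \<inter> {u..<v})"
  obtains u' v' where "0 \<le> u'" "u' < v'" "v' \<le> 1"
    "\<delta> * (v' - u') \<le> measure lborel (A \<inter> {u'..<v'})" "\<beta> * \<delta> * (v - u) \<le> v' - u'"
proof -
  have "\<delta> * (v - u) \<le> 1 * (v - u)"
    using heavy measure_lborel_Int_Ico_le[OF A less_imp_le[OF uv(2)]] by simp
  then have "\<delta> \<le> 1" using uv(2) by (simp add: mult_le_cancel_right)
  note conclude = that
  have expand: thesis
    if "0 \<le> \<beta> * a - k" "\<beta> * b - k \<le> 1" "a < b" "b - a \<le> v - u"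
      and heavy_ab: "\<delta> * (v - u) \<le> measure lborel (A \<inter> {a..<b})"
      and branch: "\<And>x. x \<in> A \<Longrightarrow> a \<le> x \<Longrightarrow> x < b \<Longrightarrow> \<beta> * x - k \<in> A"
    for a b k
    using heavy_interval_expanding_affine[OF _ A \<delta>(1) _ that(4) heavy_ab branch] that(1-3) \<beta>
    by (intro conclude[of "\<beta> * a - k" "\<beta> * b - k"]) (auto simp: mult_strict_left_mono)
  have lower: "\<beta> * x - 0 \<in> A" if "x \<in> A" "0 \<le> x" "x < 1/\<beta>" for x
    using beta_map_lower_branch[of \<beta> x] invariant[OF that(1)] that \<beta> by simp
  have upper: "\<beta> * x - 1 \<in> A" if "x \<in> A" "1/\<beta> \<le> x" "x < 1" for x
    using beta_map_upper_branch[of \<beta> x] invariant[OF that(1)] that \<beta> by simp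
  consider "v \<le> 1/\<beta>" | "1/\<beta> \<le> u" | "u < 1/\<beta>" "1/\<beta> < v" by linarith
  then show thesis
  proof cases
    case 1
    show thesis
    proof (rule expand[of u 0 v])
      show "\<beta> * v - 0 \<le> 1" using 1 \<beta> by (simp add: field_simps)
      show "\<beta> * x - 0 \<in> A" if "x \<in> A" "u \<le> x" "x < v" for x
        using lower that uv 1 by simp
    qed (use uv \<beta> heavy in auto)
  next
    case 2
    have "\<beta> * v - 1 \<le> 1" using uv \<beta> mult_mono[of \<beta> 2 v 1] by simp
    then show thesis
    proof (rule expand[of u 1 v, rotated])
      show "0 \<le> \<beta> * u - 1" using 2 \<beta> by (simp add: field_simps)
      show "\<beta> * x - 1 \<in> A" if "x \<in> A" "u \<le> x" "x < v" for x
        using upper that uv 2 by simp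
    qed (use uv heavy in auto)
  next
    case 3
    have same: "measure lborel (A \<inter> {u..<1/\<beta>}) = measure lborel (A \<inter> {u..<v})"
      using \<open>\<delta> \<le> 1\<close> uv 3 heavy
      by (intro beta_heavy_interval_straddling[OF \<beta> A invariant hole _ \<delta>(2)]) auto
    show thesis
    proof (rule expand[of u 0 "1/\<beta>"])
      show "\<beta> * x - 0 \<in> A" if "x \<in> A" "u \<le> x" "x < 1/\<beta>" for x
        using lower that uv by simp
    qed (use uv \<beta> 3 heavy same in auto)
  qed
qed

lemma beta_invariant_set_intervals_light:
  fixes A :: "real set"
  assumes \<beta>: "1 < \<beta>" "\<beta> \<le> 2" and A: "A \<in> sets borel"
    and invariant: "\<And>x. x \<in> A \<Longrightarrow> beta_map \<beta> x \<in> A" and hole: "\<And>x. x \<in> A \<Longrightarrow> \<epsilon> \<le> x"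
    and \<delta>: "1 < \<beta> * \<delta>" "1 - \<delta> < \<epsilon> / \<beta>"
    and uv: "0 \<le> u" "u < v" "v \<le> 1"
  shows "measure lborel (A \<inter> {u..<v}) < \<delta> * (v - u)"
proof (rule ccontr)
  assume "\<not> ?thesis"
  then have heavy: "\<delta> * (v - u) \<le> measure lborel (A \<inter> {u..<v})" by simp
  have "0 \<le> \<delta>" using \<delta>(1) \<beta>(1) by (smt (verit) mult_nonneg_nonpos)
  have "\<exists>u' v'. 0 \<le> u' \<and> u' < v' \<and> v' \<le> 1 \<and> \<delta> * (v' - u') \<le> measure lborel (A \<inter> {u'..<v'})
          \<and> (\<beta> * \<delta>) ^ n * (v - u) \<le> v' - u'" for n
  proof (induction n)
    case 0
    show ?case using uv heavy by auto
  next
    case (Suc n)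
    then obtain u' v' where uv': "0 \<le> u'" "u' < v'" "v' \<le> 1"
      "\<delta> * (v' - u') \<le> measure lborel (A \<inter> {u'..<v'})" and long: "(\<beta> * \<delta>) ^ n * (v - u) \<le> v' - u'"
      by blast
    obtain u'' v'' where uv'': "0 \<le> u''" "u'' < v''" "v'' \<le> 1"
      "\<delta> * (v'' - u'') \<le> measure lborel (A \<inter> {u''..<v''})" and longer: "\<beta> * \<delta> * (v' - u') \<le> v'' - u''"
      using beta_heavy_interval_expands[OF \<beta> A invariant hole \<open>0 \<le> \<delta>\<close> \<delta>(2) uv'] by blast
    have "(\<beta> * \<delta>) ^ Suc n * (v - u) \<le> \<beta> * \<delta> * (v' - u')"
      using mult_left_mono[OF long, of "\<beta> * \<delta>"] \<delta>(1) by (simp add: mult.assoc)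
    then show ?case using uv'' longer by (meson order_trans)
  qed
  then have bounded: "(\<beta> * \<delta>) ^ n * (v - u) \<le> 1" for n
    by (smt (verit))
  obtain n where "1 / (v - u) < (\<beta> * \<delta>) ^ n"
    using real_arch_pow[OF \<delta>(1)] by blast
  then have "1 < (\<beta> * \<delta>) ^ n * (v - u)" using uv by (simp add: field_simps)
  then show False using bounded[of n] by simp
qed

definition beta_survivors :: "real \<Rightarrow> real \<Rightarrow> real set" where
  "beta_survivors \<beta> \<epsilon> = {x \<in> {0..1}. \<forall>n. \<epsilon> \<le> (beta_map \<beta> ^^ n) x}"

lemma beta_survivors_borel: "beta_survivors \<beta> \<epsilon> \<in> sets borel"
proof -
  have "beta_survivors \<beta> \<epsilon> = {0..1} \<inter> (\<Inter>n. (beta_map \<beta> ^^ n) -` {\<epsilon>..})"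
    by (auto simp: beta_survivors_def)
  then show ?thesis by simp
qed

lemma beta_survivors_invariant:
  assumes "x \<in> beta_survivors \<beta> \<epsilon>"
  shows "beta_map \<beta> x \<in> beta_survivors \<beta> \<epsilon>"
proof -
  have "\<epsilon> \<le> (beta_map \<beta> ^^ n) (beta_map \<beta> x)" for n
  proof -
    have "\<epsilon> \<le> (beta_map \<beta> ^^ Suc n) x" using assms unfolding beta_survivors_def by blast
    then show ?thesis by (simp only: funpow_Suc_right comp_apply)
  qed
  then show ?thesis
    using beta_map_range[of \<beta> x] by (simp add: beta_survivors_def less_imp_le)
qed

lemma beta_survivors_ge: "x \<in> beta_survivors \<beta> \<epsilon> \<Longrightarrow> \<epsilon> \<le> x"
  by (auto simp: beta_survivors_def dest: spec[of _ 0])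

lemma beta_survivors_null:
  assumes \<beta>: "1 < \<beta>" "\<beta> \<le> 2" and "0 < \<epsilon>"
  shows "beta_survivors \<beta> \<epsilon> \<in> null_sets lborel"
proof -
  define \<mu> where "\<mu> = min (\<epsilon> / \<beta>) (1 - 1/\<beta>)"
  have "0 < \<mu>" "\<mu> \<le> \<epsilon> / \<beta>" "\<mu> \<le> 1 - 1/\<beta>" "0 < 1/\<beta>"
    using assms by (auto simp: \<mu>_def)
  define \<delta> where "\<delta> = 1 - \<mu> / 2"
  have \<delta>: "0 \<le> \<delta>" "\<delta> < 1" "1/\<beta> < \<delta>" "1 - \<delta> < \<epsilon> / \<beta>"
    unfolding \<delta>_def using \<open>0 < \<mu>\<close> \<open>\<mu> \<le> \<epsilon> / \<beta>\<close> \<open>\<mu> \<le> 1 - 1/\<beta>\<close> \<open>0 < 1/\<beta>\<close>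
    by linarith+
  have "1 < \<beta> * \<delta>" using \<delta>(3) \<beta>(1) by (simp add: field_simps)
  show ?thesis
  proof (rule null_sets_lborel_if_intervals_light[OF beta_survivors_borel _ \<delta>(1,2)])
    show "beta_survivors \<beta> \<epsilon> \<subseteq> {0..1}" by (auto simp: beta_survivors_def)
    show "measure lborel (beta_survivors \<beta> \<epsilon> \<inter> {u..<v}) \<le> \<delta> * (v - u)"
      if "0 \<le> u" "u < v" "v \<le> 1" for u v
    proof -
      have "measure lborel (beta_survivors \<beta> \<epsilon> \<inter> {u..<v}) < \<delta> * (v - u)"
        by (rule beta_invariant_set_intervals_light[OF \<beta> beta_survivors_borel])
          (rule beta_survivors_invariant beta_survivors_ge \<open>1 < \<beta> * \<delta>\<close> \<delta>(4) that | assumption)+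
      then show ?thesis by simp
    qed
  qed
qed

theorem mainTheorem8:
  fixes \<beta> :: real and m :: "real measure"
  assumes "1 < \<beta>" and "\<beta> \<le> 2"
    and "is_beta_acim \<beta> m"
  shows "\<not> (\<exists>(c::real) (\<psi>::real \<Rightarrow> real).
            bounded_variation_on \<psi> 0 1 \<and>
            (AE x in m. indicator {1/\<beta>..1} x = c + \<psi> (beta_map \<beta> x) - \<psi> x))"
proof
  assume "\<exists>c \<psi>. bounded_variation_on \<psi> 0 1 \<and>
            (AE x in m. indicator {1/\<beta>..1} x = c + \<psi> (beta_map \<beta> x) - \<psi> x)"
  then obtain c and \<psi> :: "real \<Rightarrow> real" where bv: "bounded_variation_on \<psi> 0 1"
    and coboundary: "AE x in m. indicator {1/\<beta>..1} x = c + \<psi> (beta_map \<beta> x) - \<psi> x"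
    by blast
  obtain B where osc: "\<And>y z. y \<in> {0..1} \<Longrightarrow> z \<in> {0..1} \<Longrightarrow> \<bar>\<psi> y - \<psi> z\<bar> \<le> B"
    using bounded_variation_on_bounded_oscillation[OF bv] by blast
  note orbit = is_beta_acim_AE_cohomologous_on_orbit[OF assms(3) coboundary]
  show False
  proof (cases "c \<le> 0")
    case True
    have "AE x in m. x \<in> {x \<in> {0..1}. \<exists>n. (beta_map \<beta> ^^ n) x = 0}"
      using orbit by eventually_elim (auto intro: coboundary_orbit_hits_zero[OF assms(1) _ True osc])
    moreover have "{x \<in> {0..1}. \<exists>n. (beta_map \<beta> ^^ n) x = 0} \<in> null_sets lborel"
      using assms(1) by (intro countable_imp_null_set_lborel countable_beta_map_grand_preimage) simp
    ultimately show False
      using is_beta_acim_not_AE_null[OF assms(3)] by blast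
  next
    case False
    obtain K :: nat where "B / c < K" using reals_Archimedean2 by blast
    then have K: "B < real K * c" using False by (simp add: field_simps)
    have "AE x in m. x \<in> beta_survivors \<beta> (1 / \<beta> ^ K)"
      using orbit
      by eventually_elim (auto simp: beta_survivors_def intro: coboundary_orbit_avoids_hole[OF assms(1) _ K osc])
    moreover have "beta_survivors \<beta> (1 / \<beta> ^ K) \<in> null_sets lborel"
      using assms(1,2) by (intro beta_survivors_null) auto
    ultimately show False
      using is_beta_acim_not_AE_null[OF assms(3)] by blast
  qed
qed

end
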